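(* Suppose that for every odd integer $n\ge 1$ and every integer $k\ge 0$ with $2^k<n<2^{k+1}$, there is an orientation of the $n$-cube in which every vertex has in-degree $n-2^k$ or $n$. Then for every positive integer $n$ and all integers $0\le a,b\le n$ for which there exist non-negative integers $s,t$ with $s+t=2^n$ and $as+bt=n2^{n-1}$, there is an orientation of the $n$-cube in which every vertex has in-degree $a$ or $b$.
   Context: The $n$-cube is the graph on binary $n$-tuples with edges between tuples differing in exactly one coordinate. An orientation assigns a direction to each edge; the in-degree of a vertex is the number of edges directed into it. *)

theory Defs
  imports Main
begin

definition cube_vertices :: "nat \<Rightarrow> bool list set" where
  "cube_vertices n = {xs. length xs = n}"

definition cube_adj :: "nat \<Rightarrow> bool list \<Rightarrow> bool list \<Rightarrow> bool" where
  "cube_adj n u v \<longleftrightarrow> u \<in> cube_vertices n \<and> v \<in> cube_vertices n \<and>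
     card {i. i < n \<and> u ! i \<noteq> v ! i} = 1"

text \<open>An orientation of the n-cube: a relation D (D u v means the edge is directed u \<rightarrow> v)
  supported on the edges, directing each edge in exactly one way.\<close>
definition is_cube_orientation :: "nat \<Rightarrow> (bool list \<Rightarrow> bool list \<Rightarrow> bool) \<Rightarrow> bool" where
  "is_cube_orientation n D \<longleftrightarrow>
     (\<forall>u v. D u v \<longrightarrow> cube_adj n u v) \<and>
     (\<forall>u v. cube_adj n u v \<longrightarrow> (D u v \<longleftrightarrow> \<not> D v u))"

definition indeg :: "(bool list \<Rightarrow> bool list \<Rightarrow> bool) \<Rightarrow> bool list \<Rightarrow> nat" where
  "indeg D v = card {u. D u v}"

end

theory Submission
  imports Defs "HOL-Computational_Algebra.Primes"
begin

(* Call (n,a,b) realisable if the n-cube has an orientation all of whose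
   in-degrees lie in {a,b}.  Realisability is stable under
   - swapping a and b, and reversing all edges: (n,a,b) \<mapsto> (n, n-a, n-b);
   - products with a regular orientation: (n,a,b) \<mapsto> (n+m, a+c, b+c) if the m-cube has an
     orientation with all in-degrees c; with the directed 4-cycle on the 2-cube (c = 1)
     this gives (n,a,b) \<mapsto> (n+2c, a+c, b+c);
   - blowing up along the parity map Q_{Ln} \<rightarrow> Q_n, which gives (n,a,b) \<mapsto> (Ln, La, Lb).
   For a \<le> b and a+b \<le> n the counting condition forces (b-a) t = 2^(n-1) (n-2a), so the
   ratio (n-2a)/(b-a) lies in [1,2] and its reduced denominator is a power of two 2^j.
   The reduced numerator m' is then 1, 2, or odd with 2^j < m' < 2^(j+1); in the last case
   the hypothesis (reversed) realises (m', 0, 2^j).  Blowing up and adding 4-cycles gives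
   (n,a,b).  The case a+b > n reduces to this one by edge reversal. *)

section \<open>Neighbours in the cube\<close>

definition flip :: "bool list \<Rightarrow> nat \<Rightarrow> bool list" where
  "flip v i = v[i := \<not> v ! i]"

lemma length_flip [simp]: "length (flip v i) = length v"
  by (simp add: flip_def)

lemma nth_flip: "i < length v \<Longrightarrow> flip v i ! j = (if j = i then \<not> v ! i else v ! j)"
  by (simp add: flip_def nth_list_update)

lemma flip_inj: "i < length v \<Longrightarrow> j < length v \<Longrightarrow> flip v i = flip v j \<Longrightarrow> i = j"
  by (metis nth_flip)

lemma flip_neq: "i < length v \<Longrightarrow> flip v i \<noteq> v"
  by (metis nth_flip)

lemma cube_adj_iff_flip: "cube_adj n u v \<longleftrightarrow> length u = n \<and> (\<exists>i<n. v = flip u i)"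
proof
  assume "cube_adj n u v"
  then have lu: "length u = n" and lv: "length v = n"
    and one: "card {i. i < n \<and> u ! i \<noteq> v ! i} = 1"
    by (auto simp: cube_adj_def cube_vertices_def)
  from one obtain i where diff: "{i. i < n \<and> u ! i \<noteq> v ! i} = {i}"
    by (auto simp: card_Suc_eq)
  then have i: "i < n" "u ! i \<noteq> v ! i" by auto
  have "v = flip u i"
  proof (rule nth_equalityI)
    show "length v = length (flip u i)" using lu lv by simp
    fix j assume "j < length v"
    then show "v ! j = flip u i ! j" using diff i lu lv by (auto simp: nth_flip)
  qed
  with lu i show "length u = n \<and> (\<exists>i<n. v = flip u i)" by blast
next
  assume "length u = n \<and> (\<exists>i<n. v = flip u i)"
  then obtain i where lu: "length u = n" and i: "i < n" and v: "v = flip u i" by blast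
  have "{j. j < n \<and> u ! j \<noteq> v ! j} = {i}" using lu i v by (auto simp: nth_flip)
  then show "cube_adj n u v" using lu v by (simp add: cube_adj_def cube_vertices_def)
qed

lemma cube_adj_sym:
  assumes "cube_adj n u v"
  shows "cube_adj n v u"
proof -
  have same: "{i. i < n \<and> v ! i \<noteq> u ! i} = {i. i < n \<and> u ! i \<noteq> v ! i}" by auto
  show ?thesis using assms unfolding cube_adj_def same by blast
qed

lemma cube_adj_flip:
  assumes "length u = n" "i < n"
  shows "cube_adj n (flip u i) u"
proof -
  have "cube_adj n u (flip u i)" using assms by (auto simp: cube_adj_iff_flip)
  then show ?thesis by (rule cube_adj_sym)
qed

lemma orientation_flip:
  assumes "is_cube_orientation n D" "v \<in> cube_vertices n" "i < n"
  shows "D (flip v i) v \<longleftrightarrow> \<not> D v (flip v i)"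
proof -
  have "cube_adj n (flip v i) v" using assms(2,3) by (simp add: cube_adj_flip cube_vertices_def)
  then show ?thesis using assms(1) unfolding is_cube_orientation_def by simp
qed

lemma indeg_coordinates:
  assumes D: "is_cube_orientation n D" and v: "v \<in> cube_vertices n"
  shows "indeg D v = card {i. i < n \<and> D (flip v i) v}"
proof -
  have "{u. D u v} = flip v ` {i. i < n \<and> D (flip v i) v}"
  proof (intro equalityI subsetI)
    fix u assume "u \<in> {u. D u v}"
    then have "cube_adj n u v" using D by (simp add: is_cube_orientation_def)
    then have "cube_adj n v u" by (rule cube_adj_sym)
    then show "u \<in> flip v ` {i. i < n \<and> D (flip v i) v}"
      using \<open>u \<in> {u. D u v}\<close> by (auto simp: cube_adj_iff_flip)
  qed auto
  moreover have "inj_on (flip v) {i. i < n \<and> D (flip v i) v}"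
    using v by (auto simp: inj_on_def cube_vertices_def intro: flip_inj)
  ultimately show ?thesis by (simp add: indeg_def card_image)
qed

section \<open>Realisable in-degree pairs\<close>

definition realisable :: "nat \<Rightarrow> nat \<Rightarrow> nat \<Rightarrow> bool" where
  "realisable n a b \<longleftrightarrow> (\<exists>D. is_cube_orientation n D \<and>
     (\<forall>v \<in> cube_vertices n. indeg D v = a \<or> indeg D v = b))"

lemma realisable_swap: "realisable n a b \<Longrightarrow> realisable n b a"
  unfolding realisable_def by blast

text \<open>Reversing every edge turns in-degree d into n - d.\<close>
lemma realisable_reverse:
  assumes "realisable n a b"
  shows "realisable n (n - a) (n - b)"
proof -
  obtain D where D: "is_cube_orientation n D"
    and deg: "\<forall>v \<in> cube_vertices n. indeg D v = a \<or> indeg D v = b"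
    using assms unfolding realisable_def by blast
  define R where "R = (\<lambda>u v. D v u)"
  have R: "is_cube_orientation n R"
    using D cube_adj_sym unfolding is_cube_orientation_def R_def by metis
  have "indeg R v = n - indeg D v" if v: "v \<in> cube_vertices n" for v
  proof -
    have "{i. i < n \<and> R (flip v i) v} = {..<n} - {i. i < n \<and> D (flip v i) v}"
      using orientation_flip[OF D v] by (auto simp: R_def)
    then show ?thesis
      by (simp add: indeg_coordinates[OF R v] indeg_coordinates[OF D v] card_Diff_subset subset_eq)
  qed
  then show ?thesis using R deg unfolding realisable_def by metis
qed

section \<open>Products of orientations\<close>

text \<open>Orientation of the (n+m)-cube = n-cube \<times> m-cube: edges changing one of the first
  n coordinates follow D1, the others follow D2.\<close>
definition prod_orientation ::
  "nat \<Rightarrow> nat \<Rightarrow> (bool list \<Rightarrow> bool list \<Rightarrow> bool) \<Rightarrow> (bool list \<Rightarrow> bool list \<Rightarrow> bool)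
     \<Rightarrow> bool list \<Rightarrow> bool list \<Rightarrow> bool" where
  "prod_orientation n m D1 D2 w w' \<longleftrightarrow> cube_adj (n + m) w w' \<and>
     (if take n w = take n w' then D2 (drop n w) (drop n w') else D1 (take n w) (take n w'))"

lemma take_flip: "take n (flip w i) = (if i < n then flip (take n w) i else take n w)"
proof (cases "i < n")
  case True
  then show ?thesis by (simp add: flip_def take_update_swap)
qed (simp add: flip_def)

lemma drop_flip:
  "i < length w \<Longrightarrow> drop n (flip w i) = (if i < n then drop n w else flip (drop n w) (i - n))"
  by (cases "i < n") (simp_all add: flip_def drop_update_swap)

lemma prod_orientation_flip:
  assumes w: "length w = n + m" and i: "i < n + m"
  shows "prod_orientation n m D1 D2 (flip w i) w \<longleftrightarrow>
           (if i < n then D1 (flip (take n w) i) (take n w) else D2 (flip (drop n w) (i - n)) (drop n w))"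
    and "prod_orientation n m D1 D2 w (flip w i) \<longleftrightarrow>
           (if i < n then D1 (take n w) (flip (take n w) i) else D2 (drop n w) (flip (drop n w) (i - n)))"
proof -
  have adj: "cube_adj (n + m) (flip w i) w" "cube_adj (n + m) w (flip w i)"
    using cube_adj_flip[OF w i] cube_adj_sym[OF cube_adj_flip[OF w i]] .
  have "i < n \<Longrightarrow> flip (take n w) i \<noteq> take n w" using w by (simp add: flip_neq)
  then show "prod_orientation n m D1 D2 (flip w i) w \<longleftrightarrow>
           (if i < n then D1 (flip (take n w) i) (take n w) else D2 (flip (drop n w) (i - n)) (drop n w))"
    and "prod_orientation n m D1 D2 w (flip w i) \<longleftrightarrow>
           (if i < n then D1 (take n w) (flip (take n w) i) else D2 (drop n w) (flip (drop n w) (i - n)))"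
    using adj w i by (auto simp: prod_orientation_def take_flip drop_flip)
qed

lemma prod_orientation_is_orientation:
  assumes D1: "is_cube_orientation n D1" and D2: "is_cube_orientation m D2"
  shows "is_cube_orientation (n + m) (prod_orientation n m D1 D2)"
  unfolding is_cube_orientation_def
proof (intro conjI allI impI)
  fix u v assume "prod_orientation n m D1 D2 u v"
  then show "cube_adj (n + m) u v" by (simp add: prod_orientation_def)
next
  fix u v assume "cube_adj (n + m) u v"
  then obtain i where u: "length u = n + m" and i: "i < n + m" and v: "v = flip u i"
    by (auto simp: cube_adj_iff_flip)
  have "take n u \<in> cube_vertices n" "drop n u \<in> cube_vertices m"
    using u by (simp_all add: cube_vertices_def)
  then show "prod_orientation n m D1 D2 u v \<longleftrightarrow> \<not> prod_orientation n m D1 D2 v u"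
    unfolding v prod_orientation_flip[OF u i]
    using orientation_flip[OF D1, of "take n u" i] orientation_flip[OF D2, of "drop n u" "i - n"] i
    by auto
qed

lemma prod_orientation_indeg:
  assumes D1: "is_cube_orientation n D1" and D2: "is_cube_orientation m D2"
    and w: "w \<in> cube_vertices (n + m)"
  shows "indeg (prod_orientation n m D1 D2) w = indeg D1 (take n w) + indeg D2 (drop n w)"
proof -
  let ?D = "prod_orientation n m D1 D2"
  have lw: "length w = n + m" using w by (simp add: cube_vertices_def)
  have tw: "take n w \<in> cube_vertices n" and dw: "drop n w \<in> cube_vertices m"
    using lw by (simp_all add: cube_vertices_def)
  let ?A = "{i. i < n \<and> D1 (flip (take n w) i) (take n w)}"
  let ?B = "{j. j < m \<and> D2 (flip (drop n w) j) (drop n w)}"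
  have split: "{i. i < n + m \<and> ?D (flip w i) w} = ?A \<union> (\<lambda>j. j + n) ` ?B"
  proof (intro equalityI subsetI)
    fix i assume "i \<in> {i. i < n + m \<and> ?D (flip w i) w}"
    then have i: "i < n + m" and into: "?D (flip w i) w" by auto
    show "i \<in> ?A \<union> (\<lambda>j. j + n) ` ?B"
    proof (cases "i < n")
      case True
      then show ?thesis using into prod_orientation_flip(1)[OF lw i] by simp
    next
      case False
      then have "i - n \<in> ?B" using into prod_orientation_flip(1)[OF lw i] i by simp
      moreover have "i = (i - n) + n" using False by simp
      ultimately show ?thesis by blast
    qed
  next
    fix i assume "i \<in> ?A \<union> (\<lambda>j. j + n) ` ?B"
    then show "i \<in> {i. i < n + m \<and> ?D (flip w i) w}"
      using prod_orientation_flip(1)[OF lw, of i] by auto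
  qed
  have "card (?A \<union> (\<lambda>j. j + n) ` ?B) = card ?A + card ((\<lambda>j. j + n) ` ?B)"
    by (rule card_Un_disjoint) auto
  also have "card ((\<lambda>j. j + n) ` ?B) = card ?B"
    by (rule card_image) (simp add: inj_on_def)
  finally show ?thesis
    using split indeg_coordinates[OF prod_orientation_is_orientation[OF D1 D2] w]
      indeg_coordinates[OF D1 tw] indeg_coordinates[OF D2 dw] by simp
qed

lemma realisable_prod_regular:
  assumes "realisable n a b" and D2: "is_cube_orientation m D2"
    and reg: "\<forall>v \<in> cube_vertices m. indeg D2 v = c"
  shows "realisable (n + m) (a + c) (b + c)"
proof -
  obtain D1 where D1: "is_cube_orientation n D1"
    and deg: "\<forall>v \<in> cube_vertices n. indeg D1 v = a \<or> indeg D1 v = b"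
    using assms(1) unfolding realisable_def by blast
  have "indeg (prod_orientation n m D1 D2) w = a + c \<or> indeg (prod_orientation n m D1 D2) w = b + c"
    if w: "w \<in> cube_vertices (n + m)" for w
  proof -
    have "take n w \<in> cube_vertices n" "drop n w \<in> cube_vertices m"
      using w by (simp_all add: cube_vertices_def)
    then show ?thesis using prod_orientation_indeg[OF D1 D2 w] deg reg by auto
  qed
  then show ?thesis
    unfolding realisable_def using prod_orientation_is_orientation[OF D1 D2] by blast
qed

section \<open>Small cubes\<close>

lemma realisable_0: "realisable 0 0 0"
proof -
  have "is_cube_orientation 0 (\<lambda>u v. False)"
    by (simp add: is_cube_orientation_def cube_adj_iff_flip)
  moreover have "indeg (\<lambda>u v. False) v = 0" for v by (simp add: indeg_def)
  ultimately show ?thesis unfolding realisable_def by blast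
qed

lemma realisable_1: "realisable 1 0 1"
proof -
  define D where "D = (\<lambda>u v. u = [False] \<and> v = [True])"
  have D: "is_cube_orientation 1 D"
    unfolding is_cube_orientation_def
  proof (intro conjI allI impI)
    fix u v assume "D u v"
    then show "cube_adj 1 u v" by (auto simp: D_def cube_adj_iff_flip flip_def)
  next
    fix u v assume "cube_adj 1 u v"
    then obtain x where "u = [x]" "v = flip u 0" by (auto simp: cube_adj_iff_flip length_Suc_conv)
    then show "D u v \<longleftrightarrow> \<not> D v u" by (cases x) (auto simp: D_def flip_def)
  qed
  have "indeg D v \<le> 1" for v
    using card_mono[of "{[False]}" "{u. D u v}"] by (auto simp: indeg_def D_def)
  then show ?thesis using D unfolding realisable_def by (metis le_Suc_eq le_zero_eq One_nat_def)
qed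

lemma length_2_cases: "length u = 2 \<Longrightarrow> \<exists>x y. u = [x, y]"
  by (metis One_nat_def Suc_1 length_0_conv length_Suc_conv)

definition cycle4 :: "bool list \<Rightarrow> bool list \<Rightarrow> bool" where
  "cycle4 u v \<longleftrightarrow> (u = [False, False] \<and> v = [True, False]) \<or> (u = [True, False] \<and> v = [True, True])
     \<or> (u = [True, True] \<and> v = [False, True]) \<or> (u = [False, True] \<and> v = [False, False])"

lemma cycle4_orientation: "is_cube_orientation 2 cycle4"
  unfolding is_cube_orientation_def
proof (intro conjI allI impI)
  have two: "(i::nat) < 2 \<longleftrightarrow> i = 0 \<or> i = 1" for i by auto
  fix u v assume "cycle4 u v"
  then show "cube_adj 2 u v" unfolding cube_adj_iff_flip cycle4_def two by (auto simp: flip_def)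
next
  fix u v assume "cube_adj 2 u v"
  then obtain i where u: "length u = 2" and "i < 2" and v: "v = flip u i"
    by (auto simp: cube_adj_iff_flip)
  then have i: "i = 0 \<or> i = 1" by auto
  from u obtain x y where "u = [x, y]" using length_2_cases by blast
  then show "cycle4 u v \<longleftrightarrow> \<not> cycle4 v u"
    using i v by (cases x; cases y; auto simp: cycle4_def flip_def)
qed

lemma cycle4_indeg:
  assumes "v \<in> cube_vertices 2"
  shows "indeg cycle4 v = 1"
proof -
  obtain x y where v: "v = [x, y]"
    using assms length_2_cases[of v] by (auto simp: cube_vertices_def)
  show ?thesis unfolding v indeg_def by (cases x; cases y; simp add: cycle4_def)
qed

lemma realisable_2: "realisable 2 0 1"
  using cycle4_orientation cycle4_indeg unfolding realisable_def by blast

lemma realisable_add_cycles: "realisable n a b \<Longrightarrow> realisable (n + 2 * c) (a + c) (b + c)"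
proof (induction c)
  case (Suc c)
  then have "realisable (n + 2 * c + 2) (a + c + 1) (b + c + 1)"
    using realisable_prod_regular[OF _ cycle4_orientation] cycle4_indeg by blast
  then show ?case by (simp add: algebra_simps)
qed simp

section \<open>Blowing up along the parity map\<close>

definition parity :: "nat \<Rightarrow> bool list \<Rightarrow> bool list" where
  "parity n x = map (\<lambda>i. odd (card {j. j < length x \<and> j mod n = i \<and> x ! j})) [0..<n]"

lemma length_parity [simp]: "length (parity n x) = n"
  by (simp add: parity_def)

lemma parity_flip:
  assumes n: "0 < n" and j: "j < length x"
  shows "parity n (flip x j) = flip (parity n x) (j mod n)"
proof (rule nth_equalityI)
  fix i assume "i < length (parity n (flip x j))"
  then have i: "i < n" by simp
  let ?S = "{k. k < length x \<and> k mod n = i \<and> x ! k}"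
  let ?S' = "{k. k < length x \<and> k mod n = i \<and> flip x j ! k}"
  have fin: "finite ?S" "finite ?S'" by (rule finite_subset[of _ "{..<length x}"], auto)+
  have odd_S': "odd (card ?S') \<longleftrightarrow> (if i = j mod n then \<not> odd (card ?S) else odd (card ?S))"
  proof (cases "i = j mod n")
    case True
    show ?thesis
    proof (cases "x ! j")
      case set: True
      then have "?S = insert j ?S'" and "j \<notin> ?S'" using j True by (auto simp: nth_flip)
      then have "card ?S = Suc (card ?S')" using fin by simp
      then show ?thesis using True by simp
    next
      case unset: False
      then have "?S' = insert j ?S" and "j \<notin> ?S" using j True by (auto simp: nth_flip)
      then have "card ?S' = Suc (card ?S)" using fin by simp
      then show ?thesis using True by simp
    qed
  next
    case False
    then have "?S' = ?S" using j by (auto simp: nth_flip)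
    then show ?thesis using False by simp
  qed
  moreover have "parity n (flip x j) ! i = odd (card ?S')" using i by (simp add: parity_def)
  moreover have "flip (parity n x) (j mod n) ! i =
      (if i = j mod n then \<not> odd (card ?S) else odd (card ?S))"
    using i n by (simp add: nth_flip parity_def)
  ultimately show "parity n (flip x j) ! i = flip (parity n x) (j mod n) ! i" by simp
qed simp

lemma card_residues_below:
  assumes I: "I \<subseteq> {..<n}"
  shows "card {j. j < L * n \<and> j mod n \<in> I} = L * card I"
proof -
  have fin: "finite I" using I finite_subset by blast
  have "{j. j < L * n \<and> j mod n \<in> I} = (\<lambda>(q, i). q * n + i) ` ({..<L} \<times> I)"
  proof (intro equalityI subsetI)
    fix j assume j: "j \<in> {j. j < L * n \<and> j mod n \<in> I}"
    then have "j div n < L" by (simp add: less_mult_imp_div_less)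
    then show "j \<in> (\<lambda>(q, i). q * n + i) ` ({..<L} \<times> I)"
      using j by (auto intro!: image_eqI[of _ _ "(j div n, j mod n)"])
  next
    fix j assume "j \<in> (\<lambda>(q, i). q * n + i) ` ({..<L} \<times> I)"
    then obtain q i where "q < L" "i \<in> I" "j = q * n + i" by auto
    moreover have "i < n" using \<open>i \<in> I\<close> I by auto
    moreover have "q * n + n \<le> L * n" using \<open>q < L\<close> by (metis Suc_leI add.commute mult_Suc mult_le_mono1)
    ultimately show "j \<in> {j. j < L * n \<and> j mod n \<in> I}" by simp
  qed
  moreover have "inj_on (\<lambda>(q, i). q * n + i) ({..<L} \<times> I)"
  proof (rule inj_onI, clarsimp)
    fix q i q' i' assume "i \<in> I" "i' \<in> I" and eq: "q * n + i = q' * n + i'"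
    then have "i < n" "i' < n" using I by auto
    then show "q = q' \<and> i = i'"
      using arg_cong[OF eq, of "\<lambda>k. k div n"] arg_cong[OF eq, of "\<lambda>k. k mod n"] by simp
  qed
  ultimately show ?thesis using fin by (simp add: card_image card_cartesian_product)
qed

definition blowup :: "nat \<Rightarrow> nat \<Rightarrow> (bool list \<Rightarrow> bool list \<Rightarrow> bool) \<Rightarrow> bool list \<Rightarrow> bool list \<Rightarrow> bool" where
  "blowup L n D x y \<longleftrightarrow> cube_adj (L * n) x y \<and> D (parity n x) (parity n y)"

lemma blowup_flip:
  assumes n: "0 < n" and x: "length x = L * n" and j: "j < L * n"
  shows "blowup L n D (flip x j) x \<longleftrightarrow> D (flip (parity n x) (j mod n)) (parity n x)"
    and "blowup L n D x (flip x j) \<longleftrightarrow> D (parity n x) (flip (parity n x) (j mod n))"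
  using cube_adj_flip[OF x j] cube_adj_sym[OF cube_adj_flip[OF x j]] parity_flip[OF n, of j x] x j
  by (simp_all add: blowup_def)

lemma blowup_is_orientation:
  assumes n: "0 < n" and D: "is_cube_orientation n D"
  shows "is_cube_orientation (L * n) (blowup L n D)"
  unfolding is_cube_orientation_def
proof (intro conjI allI impI)
  fix u v assume "blowup L n D u v"
  then show "cube_adj (L * n) u v" by (simp add: blowup_def)
next
  fix u v assume "cube_adj (L * n) u v"
  then obtain j where u: "length u = L * n" and j: "j < L * n" and v: "v = flip u j"
    by (auto simp: cube_adj_iff_flip)
  show "blowup L n D u v \<longleftrightarrow> \<not> blowup L n D v u"
    unfolding v blowup_flip[OF n u j]
    using orientation_flip[OF D, of "parity n u" "j mod n"] n by (simp add: cube_vertices_def)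
qed

text \<open>Every in-edge downstairs lifts to L in-edges upstairs.\<close>
lemma blowup_indeg:
  assumes n: "0 < n" and D: "is_cube_orientation n D" and x: "x \<in> cube_vertices (L * n)"
  shows "indeg (blowup L n D) x = L * indeg D (parity n x)"
proof -
  have lx: "length x = L * n" using x by (simp add: cube_vertices_def)
  have px: "parity n x \<in> cube_vertices n" by (simp add: cube_vertices_def)
  let ?I = "{i. i < n \<and> D (flip (parity n x) i) (parity n x)}"
  have "{j. j < L * n \<and> blowup L n D (flip x j) x} = {j. j < L * n \<and> j mod n \<in> ?I}"
    using blowup_flip(1)[OF n lx] n by auto
  then show ?thesis
    using indeg_coordinates[OF blowup_is_orientation[OF n D] x] indeg_coordinates[OF D px]
      card_residues_below[of ?I n L] by auto
qed

lemma realisable_scale: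
  assumes n: "0 < n" and "realisable n a b"
  shows "realisable (L * n) (L * a) (L * b)"
proof -
  obtain D where D: "is_cube_orientation n D"
    and deg: "\<forall>v \<in> cube_vertices n. indeg D v = a \<or> indeg D v = b"
    using assms(2) unfolding realisable_def by blast
  have "indeg (blowup L n D) x = L * a \<or> indeg (blowup L n D) x = L * b"
    if x: "x \<in> cube_vertices (L * n)" for x
  proof -
    have "parity n x \<in> cube_vertices n" by (simp add: cube_vertices_def)
    then have "indeg D (parity n x) = a \<or> indeg D (parity n x) = b" using deg by blast
    then show ?thesis using blowup_indeg[OF n D x] by metis
  qed
  then show ?thesis
    unfolding realisable_def using blowup_is_orientation[OF n D] by blast
qed

section \<open>The arithmetic reduction\<close>

lemma dyadic_ratio:
  fixes m d t :: nat
  assumes d: "0 < d" and dm: "d \<le> m" and md: "m \<le> 2 * d" and eq: "d * t = 2 ^ N * m"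
  obtains g m' j where "m = g * m'" "d = g * 2 ^ j" "coprime m' (2 ^ j)"
    "2 ^ j \<le> m'" "m' \<le> 2 ^ (j + 1)"
proof -
  define g where "g = gcd m d"
  define m' where "m' = m div g"
  define d' where "d' = d div g"
  have g: "0 < g" using d by (simp add: g_def)
  have mg: "m = g * m'" and dg: "d = g * d'" by (simp_all add: m'_def d'_def g_def)
  have cop: "coprime m' d'" unfolding m'_def d'_def g_def using d by (intro div_gcd_coprime) simp
  have "d' * t = 2 ^ N * m'" using eq g by (simp add: mg dg ac_simps)
  then have "d' dvd 2 ^ N * m'" by (metis dvd_triv_left)
  then have "d' dvd 2 ^ N" using cop by (simp add: coprime_dvd_mult_left_iff coprime_commute)
  then obtain j where "d' = 2 ^ j" using divides_primepow_nat[of 2 d' N] by auto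
  then show ?thesis using that g mg dg cop dm md by simp
qed

lemma realisable_base:
  assumes hyp: "\<And>n k. odd n \<Longrightarrow> 2 ^ k < n \<Longrightarrow> n < 2 ^ (k + 1) \<Longrightarrow> realisable n (n - 2 ^ k) n"
    and cop: "coprime m' (2 ^ j :: nat)" and lo: "2 ^ j \<le> m'" and hi: "m' \<le> 2 ^ (j + 1)"
  shows "realisable m' 0 (2 ^ j)"
proof (cases "j = 0")
  case True
  then have "m' = 1 \<or> m' = 2" using lo hi by auto
  then show ?thesis using True realisable_1 realisable_2 by auto
next
  case False
  then have "odd m'" using cop by (simp add: coprime_commute)
  then have "m' \<noteq> 2 ^ j" "m' \<noteq> 2 ^ (j + 1)" using False by auto
  then have "realisable m' (m' - 2 ^ j) m'" using hyp \<open>odd m'\<close> lo hi by simp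
  then have "realisable m' (m' - (m' - 2 ^ j)) (m' - m')" by (rule realisable_reverse)
  then show ?thesis using lo by (simp add: realisable_swap)
qed

lemma realisable_small_sum:
  assumes hyp: "\<And>n k. odd n \<Longrightarrow> 2 ^ k < n \<Longrightarrow> n < 2 ^ (k + 1) \<Longrightarrow> realisable n (n - 2 ^ k) n"
    and ab: "a \<le> b" and abn: "a + b \<le> n" and n: "0 < n"
    and st: "s + t = 2 ^ n" and count: "a * s + b * t = n * 2 ^ (n - 1)"
  shows "realisable n a b"
proof -
  define h :: nat where "h = 2 ^ (n - 1)"
  have h: "0 < h" by (simp add: h_def)
  have st2: "s + t = 2 * h" using st n by (simp add: h_def power_eq_if)
  have count_h: "a * s + b * t = n * h" using count by (simp add: h_def)
  text \<open>Writing b = a + (b - a), the counting condition becomes (b - a) t = h (n - 2a).\<close>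
  have "b * t = a * t + (b - a) * t" using ab by (simp add: diff_mult_distrib)
  then have "a * (s + t) + (b - a) * t = n * h" using count_h by (simp add: add_mult_distrib2)
  then have "(b - a) * t = n * h - (2 * a) * h" using st2 by simp
  then have eq: "(b - a) * t = 2 ^ (n - 1) * (n - 2 * a)"
    unfolding h_def by (metis diff_mult_distrib mult.commute)
  text \<open>Since a \<le> b, the counting condition also gives n \<le> 2 b.\<close>
  have "a * s \<le> b * s" using ab by simp
  then have "n * h \<le> b * s + b * t" using count_h by linarith
  then have "n * h \<le> b * (s + t)" by (simp add: add_mult_distrib2)
  then have nb: "n \<le> 2 * b" using st2 h by simp
  show ?thesis
  proof (cases "a = b")
    case True
    then have "n = 2 * a" using abn nb by simp
    then show ?thesis using realisable_add_cycles[OF realisable_0, of a] \<open>a = b\<close> by simp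
  next
    case False
    have "0 < b - a" "b - a \<le> n - 2 * a" "n - 2 * a \<le> 2 * (b - a)"
      using False ab abn nb by auto
    then obtain g m' j where mg: "n - 2 * a = g * m'" and dg: "b - a = g * 2 ^ j"
      and cop: "coprime m' (2 ^ j)" and bounds: "2 ^ j \<le> m'" "m' \<le> 2 ^ (j + 1)"
      using eq by (rule dyadic_ratio)
    have "0 < m'" using less_le_trans[OF _ bounds(1)] by simp
    moreover have "realisable m' 0 (2 ^ j)" using realisable_base[OF hyp cop bounds] .
    ultimately have "realisable (g * m') (g * 0) (g * 2 ^ j)" by (rule realisable_scale)
    then have "realisable (n - 2 * a + 2 * a) (0 + a) (b - a + a)"
      unfolding mg dg by (intro realisable_add_cycles) simp
    then show ?thesis using abn ab by simp
  qed
qed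

text \<open>Edge reversal preserves the counting condition: s vertices of in-degree a and t of
  in-degree b become s vertices of in-degree n - a and t of in-degree n - b.\<close>
lemma counting_reverse:
  fixes a b n s t h :: nat
  assumes "a \<le> n" "b \<le> n" and st: "s + t = 2 * h" and count: "a * s + b * t = n * h"
  shows "(n - b) * t + (n - a) * s = n * h"
proof -
  have "(n - b) * t + b * t = n * t" "(n - a) * s + a * s = n * s"
    using assms(1,2) by (metis add_mult_distrib le_add_diff_inverse2)+
  moreover have "n * s + n * t = 2 * (n * h)" using st by (metis add_mult_distrib2 mult.left_commute)
  ultimately show ?thesis using count by linarith
qed

text \<open>The case a \<le> b; if a + b > n, edge reversal leads to the pair n - b \<le> n - a, whose
  sum is at most n.\<close>
lemma realisable_ordered:
  assumes hyp: "\<And>n k. odd n \<Longrightarrow> 2 ^ k < n \<Longrightarrow> n < 2 ^ (k + 1) \<Longrightarrow> realisable n (n - 2 ^ k) n"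
    and n: "0 < n" and ab: "a \<le> b" and bn: "b \<le> n"
    and st: "s + t = 2 ^ n" and count: "a * s + b * t = n * 2 ^ (n - 1)"
  shows "realisable n a b"
proof (cases "a + b \<le> n")
  case True
  show ?thesis using realisable_small_sum[OF hyp ab True n st count] .
next
  case False
  have "s + t = 2 * 2 ^ (n - 1)" using st n by (simp add: power_eq_if)
  then have "(n - b) * t + (n - a) * s = n * 2 ^ (n - 1)"
    using counting_reverse[of a n b s t] ab bn count by simp
  moreover have "n - b \<le> n - a" "(n - b) + (n - a) \<le> n" using ab bn False by auto
  ultimately have "realisable n (n - b) (n - a)"
    using realisable_small_sum[OF hyp _ _ n st[unfolded add.commute[of s]]] by blast
  then have "realisable n (n - (n - a)) (n - (n - b))"
    using realisable_reverse realisable_swap by blast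
  then show ?thesis using ab bn by simp
qed

theorem corollary3:
  assumes "\<forall>(n::nat) (k::nat). odd n \<and> n \<ge> 1 \<and> 2 ^ k < n \<and> n < 2 ^ (k + 1) \<longrightarrow>
      (\<exists>D. is_cube_orientation n D \<and>
         (\<forall>v \<in> cube_vertices n. indeg D v = n - 2 ^ k \<or> indeg D v = n))"
  shows "\<forall>(n::nat) (a::nat) (b::nat). n > 0 \<and> a \<le> n \<and> b \<le> n \<and>
      (\<exists>s t :: nat. s + t = 2 ^ n \<and> a * s + b * t = n * 2 ^ (n - 1)) \<longrightarrow>
      (\<exists>D. is_cube_orientation n D \<and>
         (\<forall>v \<in> cube_vertices n. indeg D v = a \<or> indeg D v = b))"
proof (intro allI impI)
  have hyp: "realisable n (n - 2 ^ k) n" if "odd n" "2 ^ k < n" "n < 2 ^ (k + 1)" for n k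
    using assms that odd_pos[OF \<open>odd n\<close>] unfolding realisable_def by simp
  fix n a b :: nat
  assume "n > 0 \<and> a \<le> n \<and> b \<le> n \<and>
    (\<exists>s t :: nat. s + t = 2 ^ n \<and> a * s + b * t = n * 2 ^ (n - 1))"
  then obtain s t where n: "0 < n" and an: "a \<le> n" and bn: "b \<le> n"
    and st: "s + t = 2 ^ n" and count: "a * s + b * t = n * 2 ^ (n - 1)" by blast
  text \<open>Swapping (a, s) with (b, t) reduces to the case a \<le> b.\<close>
  have "realisable n a b"
  proof (cases "a \<le> b")
    case True
    show ?thesis using realisable_ordered[OF hyp n True bn st count] .
  next
    case False
    have "realisable n b a"
      using realisable_ordered[OF hyp n _ an, of b t s] False st count by (simp add: add.commute)
    then show ?thesis by (rule realisable_swap)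
  qed
  then show "\<exists>D. is_cube_orientation n D \<and>
      (\<forall>v \<in> cube_vertices n. indeg D v = a \<or> indeg D v = b)"
    unfolding realisable_def .
qed

end
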